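(* Both pairs $(T_n,T_L)$ and $(T_L',T_n')$ satisfy the rearrangement inequality and the dual rearrangement inequality.
   Context: Here $T_n(x,y)=\min(x,y)$ if $x+y>1$ and $0$ otherwise (nilpotent minimum); $T_L(x,y)=\max(x+y-1,0)$ (Łukasiewicz $T$-norm); $T_L'(x,y)=\min(x+y,1)$ (bounded sum); $T_n'(x,y)=\max(x,y)$ if $x+y<1$ and $1$ otherwise (nilpotent maximum); all are functions $[0,1]^2\to[0,1]$ and are commutative, associative, monotone uninorms. For such a pair $(\otimes,\oplus)$ (first component $\otimes$, second $\oplus$), it satisfies the rearrangement inequality if for every $n\geq1$, all $0\leq x_1\leq\cdots\leq x_n\leq 1$, $0\leq y_1\leq\cdots\leq y_n\leq 1$ and every permutation $\sigma$ of $\{1,\dots,n\}$, $$(x_n\otimes y_1)\oplus\cdots\oplus(x_1\otimes y_n)\leq (x_{\sigma(1)}\otimes y_1)\oplus\cdots\oplus(x_{\sigma(n)}\otimes y_n)\leq (x_1\otimes y_1)\oplus\cdots\oplus(x_n\otimes y_n),$$ and the dual rearrangement inequality if for all such data $$(x_n\oplus y_1)\otimes\cdots\otimes(x_1\oplus y_n)\geq (x_{\sigma(1)}\oplus y_1)\otimes\cdots\otimes(x_{\sigma(n)}\oplus y_n)\geq (x_1\oplus y_1)\otimes\cdots\otimes(x_n\oplus y_n).$$ *)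

theory Defs
  imports Complex_Main "HOL-Combinatorics.Permutations"
begin

definition T_n :: "real \<Rightarrow> real \<Rightarrow> real" where
  "T_n x y = (if x + y > 1 then min x y else 0)"

definition T_L :: "real \<Rightarrow> real \<Rightarrow> real" where
  "T_L x y = max (x + y - 1) 0"

definition T_L' :: "real \<Rightarrow> real \<Rightarrow> real" where
  "T_L' x y = min (x + y) 1"

definition T_n' :: "real \<Rightarrow> real \<Rightarrow> real" where
  "T_n' x y = (if x + y < 1 then max x y else 1)"

text \<open>Iterated operation: iter op a k = a 0 op a 1 op ... op a k (left-nested),
  so an n-fold expression (n \<ge> 1) is iter op a (n - 1).\<close>
fun iter :: "(real \<Rightarrow> real \<Rightarrow> real) \<Rightarrow> (nat \<Rightarrow> real) \<Rightarrow> nat \<Rightarrow> real" where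
  "iter op a 0 = a 0"
| "iter op a (Suc k) = op (iter op a k) (a (Suc k))"

definition sorted01 :: "nat \<Rightarrow> (nat \<Rightarrow> real) \<Rightarrow> bool" where
  "sorted01 n x \<longleftrightarrow> (\<forall>i<n. 0 \<le> x i \<and> x i \<le> 1) \<and> (\<forall>i j. i \<le> j \<longrightarrow> j < n \<longrightarrow> x i \<le> x j)"

definition rearrangement_ineq :: "(real \<Rightarrow> real \<Rightarrow> real) \<Rightarrow> (real \<Rightarrow> real \<Rightarrow> real) \<Rightarrow> bool" where
  "rearrangement_ineq otimes oplus \<longleftrightarrow>
    (\<forall>n x y \<sigma>. n \<ge> 1 \<longrightarrow> sorted01 n x \<longrightarrow> sorted01 n y \<longrightarrow> \<sigma> permutes {..<n} \<longrightarrow>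
       iter oplus (\<lambda>i. otimes (x (n - 1 - i)) (y i)) (n - 1)
         \<le> iter oplus (\<lambda>i. otimes (x (\<sigma> i)) (y i)) (n - 1)
     \<and> iter oplus (\<lambda>i. otimes (x (\<sigma> i)) (y i)) (n - 1)
         \<le> iter oplus (\<lambda>i. otimes (x i) (y i)) (n - 1))"

definition dual_rearrangement_ineq :: "(real \<Rightarrow> real \<Rightarrow> real) \<Rightarrow> (real \<Rightarrow> real \<Rightarrow> real) \<Rightarrow> bool" where
  "dual_rearrangement_ineq otimes oplus \<longleftrightarrow>
    (\<forall>n x y \<sigma>. n \<ge> 1 \<longrightarrow> sorted01 n x \<longrightarrow> sorted01 n y \<longrightarrow> \<sigma> permutes {..<n} \<longrightarrow>
       iter otimes (\<lambda>i. oplus (x (n - 1 - i)) (y i)) (n - 1)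
         \<ge> iter otimes (\<lambda>i. oplus (x (\<sigma> i)) (y i)) (n - 1)
     \<and> iter otimes (\<lambda>i. oplus (x (\<sigma> i)) (y i)) (n - 1)
         \<ge> iter otimes (\<lambda>i. oplus (x i) (y i)) (n - 1))"

end

theory Submission
  imports Defs
begin

text \<open>Write \<open>\<oplus>\<close> for the outer and \<open>\<otimes>\<close> for the inner operation. As \<open>\<oplus>\<close> is
  commutative and associative on \<open>[0,1]\<close>, the iterated \<open>\<oplus>\<close> of the terms \<open>x (\<sigma> k) \<otimes> y k\<close>
  does not depend on the order of the terms. By induction on \<open>n\<close>, one transposition of \<open>\<sigma>\<close>
  puts the largest \<open>x\<close> opposite the largest \<open>y\<close>: it replaces
  \<open>(x i' \<otimes> y k) \<oplus> (x i \<otimes> y k')\<close> with \<open>i < i'\<close>, \<open>k < k'\<close> by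
  \<open>(x i \<otimes> y k) \<oplus> (x i' \<otimes> y k')\<close>, which does not decrease the value by the case \<open>n = 2\<close>
  of the inequality (a finite case distinction for each of the four pairs) and monotonicity of
  \<open>\<oplus>\<close>. The bound by the reversed pairing is the same statement for the reversed sequence \<open>x\<close>,
  and the dual inequality is the same argument for the reversed order.\<close>

context abel_semigroup
begin

interpretation comp_fun_commute f
  by standard (simp add: fun_eq_iff left_commute)

interpretation comp: comp_fun_commute "f \<circ> h"
  by (fact comp_comp_fun_commute)

lemma fold_lessThan_Suc:
  "Finite_Set.fold (f \<circ> h) z {..<Suc n} = f (h n) (Finite_Set.fold (f \<circ> h) z {..<n})"
  by (simp add: lessThan_Suc)

lemma fold_exchange:
  fixes R :: "'a \<Rightarrow> 'a \<Rightarrow> bool"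
  assumes mono: "\<And>u u' v. R u u' \<Longrightarrow> R (f u v) (f u' v)"
    and A: "finite A" "j \<in> A" "m \<in> A" "j \<noteq> m"
    and agree: "\<And>k. k \<in> A - {j, m} \<Longrightarrow> h k = h' k"
    and pair: "R (f (h j) (h m)) (f (h' j) (h' m))"
  shows "R (Finite_Set.fold (f \<circ> h) z A) (Finite_Set.fold (f \<circ> h') z A)"
proof -
  define B where "B = A - {j, m}"
  have A_eq: "A = insert j (insert m B)" and B: "finite B" "j \<notin> B" "m \<notin> B"
    using A unfolding B_def by auto
  have rest: "Finite_Set.fold (f \<circ> h) z B = Finite_Set.fold (f \<circ> h') z B"
    using agree B unfolding B_def
    by (intro Finite_Set.fold_cong[of UNIV] comp.comp_fun_commute_on_axioms) auto
  have split: "Finite_Set.fold (f \<circ> k) z A = f (f (k j) (k m)) (Finite_Set.fold (f \<circ> k) z B)"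
    for k
    using A B unfolding A_eq by (simp add: assoc)
  show ?thesis
    unfolding split[of h] split[of h'] rest by (rule mono[OF pair])
qed

lemma fold_permutation_rel_diagonal:
  fixes R :: "'a \<Rightarrow> 'a \<Rightarrow> bool" and g :: "nat \<Rightarrow> nat \<Rightarrow> 'a" and n :: nat
  assumes R: "reflp R" "transp R"
    and mono: "\<And>u u' v. R u u' \<Longrightarrow> R (f u v) (f u' v)"
    and exchange: "\<And>i i' k k'. i < i' \<Longrightarrow> k < k' \<Longrightarrow> i' < n \<Longrightarrow> k' < n \<Longrightarrow>
      R (f (g i' k) (g i k')) (f (g i k) (g i' k'))"
    and \<sigma>: "\<sigma> permutes {..<n}"
  shows "R (Finite_Set.fold (f \<circ> (\<lambda>k. g (\<sigma> k) k)) z {..<n})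
           (Finite_Set.fold (f \<circ> (\<lambda>k. g k k)) z {..<n})"
  using exchange \<sigma>
proof (induction n arbitrary: \<sigma>)
  case 0
  then show ?case using R(1) by (simp add: reflpD)
next
  case (Suc n)
  define j where "j = inv \<sigma> n"
  define \<tau> where "\<tau> = \<sigma> \<circ> Transposition.transpose j n"
  have \<sigma>_j: "\<sigma> j = n" and j: "j < Suc n"
    using Suc.prems(2) permutes_inverses(1) permutes_in_image[OF permutes_inv[OF Suc.prems(2)]]
    unfolding j_def by auto
  have "\<tau> permutes {..<Suc n}"
    unfolding \<tau>_def using Suc.prems(2) j by (intro permutes_compose permutes_swap_id) auto
  then have "\<tau> permutes {..<n}"
    by (rule permutes_superset) (auto simp: \<tau>_def \<sigma>_j)
  then have IH: "R (Finite_Set.fold (f \<circ> (\<lambda>k. g (\<tau> k) k)) z {..<n})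
                   (Finite_Set.fold (f \<circ> (\<lambda>k. g k k)) z {..<n})"
    using Suc.prems(1) by (intro Suc.IH) auto
  have "R (Finite_Set.fold (f \<circ> (\<lambda>k. g (\<sigma> k) k)) z {..<Suc n})
          (Finite_Set.fold (f \<circ> (\<lambda>k. g (\<tau> k) k)) z {..<Suc n})"
  proof (cases "j = n")
    case True
    then show ?thesis using R(1) by (simp add: \<tau>_def reflpD)
  next
    case False
    have "\<sigma> n \<noteq> n"
      using False \<sigma>_j permutes_inj[OF Suc.prems(2)] by (metis injD)
    then have "\<sigma> n < n"
      using permutes_in_image[OF Suc.prems(2), of n] by simp
    then have "R (f (g n j) (g (\<sigma> n) n)) (f (g (\<sigma> n) j) (g n n))"
      using False j by (intro Suc.prems(1)) auto
    then show ?thesis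
      using False j
      by (intro fold_exchange[where R = R and j = j and m = n, OF mono]) (auto simp: \<tau>_def \<sigma>_j)
  qed
  moreover have "R (Finite_Set.fold (f \<circ> (\<lambda>k. g (\<tau> k) k)) z {..<Suc n})
                   (Finite_Set.fold (f \<circ> (\<lambda>k. g k k)) z {..<Suc n})"
    unfolding fold_lessThan_Suc using mono[OF IH] by (simp add: \<tau>_def \<sigma>_j commute)
  ultimately show ?case
    using R(2) by (blast dest: transpD)
qed

end

lemma iter_cong: "(\<And>i. i \<le> k \<Longrightarrow> a i = b i) \<Longrightarrow> iter op a k = iter op b k"
  by (induction k) simp_all

lemma reversal_permutes: "(\<lambda>i. if i < n then n - 1 - i else i) permutes {..<n :: nat}"
  by (rule bij_imp_permutes,
      rule bij_betw_byWitness[where f' = "\<lambda>i. if i < n then n - 1 - i else i"])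
    (auto simp: image_subset_iff)

definition clamp01 :: "real \<Rightarrow> real" where
  "clamp01 u = max 0 (min 1 u)"

locale uninorm =
  fixes op :: "real \<Rightarrow> real \<Rightarrow> real" and e :: real
  assumes neutral_in_unit: "e \<in> {0..1}"
    and closed: "x \<in> {0..1} \<Longrightarrow> y \<in> {0..1} \<Longrightarrow> op x y \<in> {0..1}"
    and commute: "x \<in> {0..1} \<Longrightarrow> y \<in> {0..1} \<Longrightarrow> op x y = op y x"
    and assoc: "x \<in> {0..1} \<Longrightarrow> y \<in> {0..1} \<Longrightarrow> z \<in> {0..1} \<Longrightarrow>
      op (op x y) z = op x (op y z)"
    and mono: "x \<le> x' \<Longrightarrow> x \<in> {0..1} \<Longrightarrow> x' \<in> {0..1} \<Longrightarrow> y \<in> {0..1} \<Longrightarrow>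
      op x y \<le> op x' y"
    and neutral: "x \<in> {0..1} \<Longrightarrow> op x e = x"
begin

text \<open>Clamping the arguments to \<open>[0,1]\<close> makes \<open>op\<close> commutative and associative on all of
  \<open>\<real>\<close>, so that \<^const>\<open>Finite_Set.fold\<close> applies to it.\<close>

definition op_clamped :: "real \<Rightarrow> real \<Rightarrow> real" where
  "op_clamped u v = op (clamp01 u) (clamp01 v)"

lemma op_clamped_eq: "u \<in> {0..1} \<Longrightarrow> v \<in> {0..1} \<Longrightarrow> op_clamped u v = op u v"
  by (simp add: op_clamped_def clamp01_def)

lemma abel_semigroup_op_clamped: "abel_semigroup op_clamped"
proof
  have clamp: "clamp01 u \<in> {0..1}" for u
    by (simp add: clamp01_def)
  then have clamp_op: "clamp01 (op_clamped u v) = op_clamped u v" for u v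
    unfolding op_clamped_def using closed by (simp add: clamp01_def)
  show "op_clamped (op_clamped a b) c = op_clamped a (op_clamped b c)" for a b c
    using assoc[OF clamp clamp clamp] unfolding op_clamped_def[of _ c] op_clamped_def[of a]
    by (simp add: clamp_op[unfolded op_clamped_def])
  show "op_clamped a b = op_clamped b a" for a b
    unfolding op_clamped_def using commute[OF clamp clamp] .
qed

lemma op_clamped_mono: "u \<le> u' \<Longrightarrow> op_clamped u v \<le> op_clamped u' v"
  unfolding op_clamped_def clamp01_def by (intro mono) auto

lemma iter_in_unit: "(\<And>i. i \<le> k \<Longrightarrow> a i \<in> {0..1}) \<Longrightarrow> iter op a k \<in> {0..1}"
  by (induction k) (simp_all add: closed[simplified])

lemma iter_eq_fold:
  assumes "\<And>i. i \<le> k \<Longrightarrow> a i \<in> {0..1}"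
  shows "iter op a k = Finite_Set.fold (op_clamped \<circ> a) e {..<Suc k}"
  using assms
proof (induction k)
  case 0
  then show ?case
    unfolding abel_semigroup.fold_lessThan_Suc[OF abel_semigroup_op_clamped]
    using neutral_in_unit by (simp add: op_clamped_eq neutral)
next
  case (Suc k)
  have "iter op a (Suc k) = op_clamped (a (Suc k)) (iter op a k)"
    using Suc.prems iter_in_unit[of k a] by (simp add: op_clamped_eq commute)
  also have "\<dots> = Finite_Set.fold (op_clamped \<circ> a) e {..<Suc (Suc k)}"
    unfolding abel_semigroup.fold_lessThan_Suc[OF abel_semigroup_op_clamped, of _ _ "Suc k"]
    using Suc by (simp add: comp_def)
  finally show ?case .
qed

lemma iter_permutation_rel_diagonal:
  fixes g :: "nat \<Rightarrow> nat \<Rightarrow> real"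
  assumes R: "R = (\<le>) \<or> R = (\<ge>)" and n: "n \<ge> 1"
    and g_unit: "\<And>i k. i < n \<Longrightarrow> k < n \<Longrightarrow> g i k \<in> {0..1}"
    and exchange: "\<And>i i' k k'. i < i' \<Longrightarrow> k < k' \<Longrightarrow> i' < n \<Longrightarrow> k' < n \<Longrightarrow>
      R (op (g i' k) (g i k')) (op (g i k) (g i' k'))"
    and \<sigma>: "\<sigma> permutes {..<n}"
  shows "R (iter op (\<lambda>k. g (\<sigma> k) k) (n - 1)) (iter op (\<lambda>k. g k k) (n - 1))"
proof -
  have iter_fold: "iter op h (n - 1) = Finite_Set.fold (op_clamped \<circ> h) e {..<n}"
    if "\<And>k. k < n \<Longrightarrow> h k \<in> {0..1}" for h
    using iter_eq_fold[of "n - 1" h] that n by simp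
  have "R (Finite_Set.fold (op_clamped \<circ> (\<lambda>k. g (\<sigma> k) k)) e {..<n})
          (Finite_Set.fold (op_clamped \<circ> (\<lambda>k. g k k)) e {..<n})"
  proof (rule abel_semigroup.fold_permutation_rel_diagonal[OF abel_semigroup_op_clamped _ _ _ _ \<sigma>])
    show "reflp R" "transp R"
      using R by (auto intro: reflpI transpI)
    show "R (op_clamped u v) (op_clamped u' v)" if "R u u'" for u u' v
      using R that op_clamped_mono by auto
    show "R (op_clamped (g i' k) (g i k')) (op_clamped (g i k) (g i' k'))"
      if "i < i'" "k < k'" "i' < n" "k' < n" for i i' k k'
      using exchange[OF that] that g_unit by (simp add: op_clamped_eq)
  qed
  moreover have "iter op (\<lambda>k. g (\<sigma> k) k) (n - 1)
      = Finite_Set.fold (op_clamped \<circ> (\<lambda>k. g (\<sigma> k) k)) e {..<n}"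
    using g_unit permutes_in_image[OF \<sigma>] by (intro iter_fold) auto
  moreover have "iter op (\<lambda>k. g k k) (n - 1) = Finite_Set.fold (op_clamped \<circ> (\<lambda>k. g k k)) e {..<n}"
    using g_unit by (intro iter_fold) auto
  ultimately show ?thesis
    by simp
qed

lemma rearrangement_bounds:
  fixes f :: "real \<Rightarrow> real \<Rightarrow> real"
  assumes R: "R = (\<le>) \<or> R = (\<ge>)"
    and f_unit: "\<And>a b. a \<in> {0..1} \<Longrightarrow> b \<in> {0..1} \<Longrightarrow> f a b \<in> {0..1}"
    and exchange: "\<And>a a' b b'. 0 \<le> a \<Longrightarrow> a \<le> a' \<Longrightarrow> a' \<le> 1 \<Longrightarrow> 0 \<le> b \<Longrightarrow> b \<le> b' \<Longrightarrow> b' \<le> 1 \<Longrightarrow>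
      R (op (f a' b) (f a b')) (op (f a b) (f a' b'))"
    and n: "n \<ge> 1" and x: "sorted01 n x" and y: "sorted01 n y" and \<sigma>: "\<sigma> permutes {..<n}"
  shows "R (iter op (\<lambda>i. f (x (n - 1 - i)) (y i)) (n - 1)) (iter op (\<lambda>i. f (x (\<sigma> i)) (y i)) (n - 1))
       \<and> R (iter op (\<lambda>i. f (x (\<sigma> i)) (y i)) (n - 1)) (iter op (\<lambda>i. f (x i) (y i)) (n - 1))"
proof
  have x_unit: "\<And>i. i < n \<Longrightarrow> x i \<in> {0..1}" and x_mono: "\<And>i i'. i \<le> i' \<Longrightarrow> i' < n \<Longrightarrow> x i \<le> x i'"
    and y_unit: "\<And>i. i < n \<Longrightarrow> y i \<in> {0..1}" and y_mono: "\<And>k k'. k \<le> k' \<Longrightarrow> k' < n \<Longrightarrow> y k \<le> y k'"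
    using x y unfolding sorted01_def by auto
  have f_xy_unit: "f (x i) (y k) \<in> {0..1}" if "i < n" "k < n" for i k
    using f_unit x_unit y_unit that by blast
  have exchange_xy:
    "R (op (f (x i') (y k)) (f (x i) (y k'))) (op (f (x i) (y k)) (f (x i') (y k')))"
    if "i \<le> i'" "k \<le> k'" "i' < n" "k' < n" for i i' k k'
    using that x_unit y_unit x_mono y_mono by (intro exchange) auto
  show "R (iter op (\<lambda>i. f (x (\<sigma> i)) (y i)) (n - 1)) (iter op (\<lambda>i. f (x i) (y i)) (n - 1))"
  proof (rule iter_permutation_rel_diagonal[OF R n _ _ \<sigma>])
    show "f (x i) (y k) \<in> {0..1}" if "i < n" "k < n" for i k
      using f_xy_unit that .
    show "R (op (f (x i') (y k)) (f (x i) (y k'))) (op (f (x i) (y k)) (f (x i') (y k')))"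
      if "i < i'" "k < k'" "i' < n" "k' < n" for i i' k k'
      using that by (intro exchange_xy) auto
  qed
  define \<rho> where "\<rho> = (\<lambda>i. if i < n then n - 1 - i else i) \<circ> \<sigma>"
  have \<rho>: "\<rho> permutes {..<n}"
    unfolding \<rho>_def using \<sigma> reversal_permutes by (rule permutes_compose)
  have R_converse: "(\<lambda>u v. R v u) = (\<le>) \<or> (\<lambda>u v. R v u) = (\<ge>)"
    using R by auto
  have "R (iter op (\<lambda>k. f (x (n - 1 - k)) (y k)) (n - 1))
          (iter op (\<lambda>k. f (x (n - 1 - \<rho> k)) (y k)) (n - 1))"
  proof (rule iter_permutation_rel_diagonal[OF R_converse n _ _ \<rho>])
    show "f (x (n - 1 - i)) (y k) \<in> {0..1}" if "i < n" "k < n" for i k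
      using f_xy_unit that by simp
    show "R (op (f (x (n - 1 - i)) (y k)) (f (x (n - 1 - i')) (y k')))
            (op (f (x (n - 1 - i')) (y k)) (f (x (n - 1 - i)) (y k')))"
      if "i < i'" "k < k'" "i' < n" "k' < n" for i i' k k'
      using that by (intro exchange_xy) auto
  qed
  moreover have "iter op (\<lambda>k. f (x (n - 1 - \<rho> k)) (y k)) (n - 1)
      = iter op (\<lambda>k. f (x (\<sigma> k)) (y k)) (n - 1)"
  proof (rule iter_cong)
    fix k assume "k \<le> n - 1"
    then have "\<sigma> k < n"
      using permutes_in_image[OF \<sigma>] n by simp
    then show "f (x (n - 1 - \<rho> k)) (y k) = f (x (\<sigma> k)) (y k)"
      by (simp add: \<rho>_def Suc_diff_Suc)
  qed
  ultimately show "R (iter op (\<lambda>i. f (x (n - 1 - i)) (y i)) (n - 1))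
                     (iter op (\<lambda>i. f (x (\<sigma> i)) (y i)) (n - 1))"
    by simp
qed

lemma rearrangement_ineqI:
  assumes "\<And>a b. a \<in> {0..1} \<Longrightarrow> b \<in> {0..1} \<Longrightarrow> f a b \<in> {0..1}"
    and "\<And>a a' b b'. 0 \<le> a \<Longrightarrow> a \<le> a' \<Longrightarrow> a' \<le> 1 \<Longrightarrow> 0 \<le> b \<Longrightarrow> b \<le> b' \<Longrightarrow> b' \<le> 1 \<Longrightarrow>
      op (f a' b) (f a b') \<le> op (f a b) (f a' b')"
  shows "rearrangement_ineq f op"
  unfolding rearrangement_ineq_def
  using rearrangement_bounds[where R = "(\<le>)" and f = f, OF _ assms] by blast

lemma dual_rearrangement_ineqI:
  assumes "\<And>a b. a \<in> {0..1} \<Longrightarrow> b \<in> {0..1} \<Longrightarrow> f a b \<in> {0..1}"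
    and "\<And>a a' b b'. 0 \<le> a \<Longrightarrow> a \<le> a' \<Longrightarrow> a' \<le> 1 \<Longrightarrow> 0 \<le> b \<Longrightarrow> b \<le> b' \<Longrightarrow> b' \<le> 1 \<Longrightarrow>
      op (f a' b) (f a b') \<ge> op (f a b) (f a' b')"
  shows "dual_rearrangement_ineq op f"
  unfolding dual_rearrangement_ineq_def
  using rearrangement_bounds[where R = "(\<ge>)" and f = f, OF _ assms] by blast

end

interpretation T_L: uninorm T_L 1
  by unfold_locales (auto simp: T_L_def)

interpretation T_n: uninorm T_n 1
  by unfold_locales (auto simp: T_n_def min_def)

interpretation T_L': uninorm T_L' 0
  by unfold_locales (auto simp: T_L'_def)

interpretation T_n': uninorm T_n' 0
  by unfold_locales (auto simp: T_n'_def max_def)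

lemma exchange_T_L_T_n:
  "0 \<le> a \<Longrightarrow> a \<le> a' \<Longrightarrow> a' \<le> 1 \<Longrightarrow> 0 \<le> b \<Longrightarrow> b \<le> b' \<Longrightarrow> b' \<le> 1 \<Longrightarrow>
    T_L (T_n a' b) (T_n a b') \<le> T_L (T_n a b) (T_n a' b')"
  unfolding T_L_def T_n_def by (auto simp: min_def max_def)

lemma exchange_T_n_T_L:
  "0 \<le> a \<Longrightarrow> a \<le> a' \<Longrightarrow> a' \<le> 1 \<Longrightarrow> 0 \<le> b \<Longrightarrow> b \<le> b' \<Longrightarrow> b' \<le> 1 \<Longrightarrow>
    T_n (T_L a' b) (T_L a b') \<ge> T_n (T_L a b) (T_L a' b')"
  unfolding T_L_def T_n_def by (auto simp: min_def max_def)

lemma exchange_T_n'_T_L':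
  "0 \<le> a \<Longrightarrow> a \<le> a' \<Longrightarrow> a' \<le> 1 \<Longrightarrow> 0 \<le> b \<Longrightarrow> b \<le> b' \<Longrightarrow> b' \<le> 1 \<Longrightarrow>
    T_n' (T_L' a' b) (T_L' a b') \<le> T_n' (T_L' a b) (T_L' a' b')"
  unfolding T_L'_def T_n'_def by (auto simp: min_def max_def)

lemma exchange_T_L'_T_n':
  "0 \<le> a \<Longrightarrow> a \<le> a' \<Longrightarrow> a' \<le> 1 \<Longrightarrow> 0 \<le> b \<Longrightarrow> b \<le> b' \<Longrightarrow> b' \<le> 1 \<Longrightarrow>
    T_L' (T_n' a' b) (T_n' a b') \<ge> T_L' (T_n' a b) (T_n' a' b')"
  unfolding T_L'_def T_n'_def by (auto simp: min_def max_def)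

theorem theorem13:
  shows "rearrangement_ineq T_n T_L \<and> dual_rearrangement_ineq T_n T_L
       \<and> rearrangement_ineq T_L' T_n' \<and> dual_rearrangement_ineq T_L' T_n'"
  using T_L.rearrangement_ineqI[where f = T_n, OF T_n.closed exchange_T_L_T_n]
    T_n.dual_rearrangement_ineqI[where f = T_L, OF T_L.closed exchange_T_n_T_L]
    T_n'.rearrangement_ineqI[where f = T_L', OF T_L'.closed exchange_T_n'_T_L']
    T_L'.dual_rearrangement_ineqI[where f = T_n', OF T_n'.closed exchange_T_L'_T_n']
  by blast

end
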